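(* Let $X$ be a set and let $\mathcal{L}$ be a nest on $X$. If $M\in\mathcal{L}$, then ${\downarrow}M=\bigcup\{L\in\mathcal{L} : M\not\subseteq L\}=\bigcup\{L\in\mathcal{L} : L\subsetneq M\}$; hence $M$ is a lower set if and only if $M=\bigcup\{L\in\mathcal{L} : L\subsetneq M\}$.
   Context: A nest on $X$ is a family of subsets of $X$ totally ordered by inclusion. Define $x\triangleleft_{\mathcal{L}} y$ iff there exists $L\in\mathcal{L}$ with $x\in L$ and $y\notin L$. For $A\subseteq X$, ${\downarrow}A=\{x\in X : \exists y\in A,\ x\triangleleft_{\mathcal{L}} y\}$; $A$ is a lower set if $A={\downarrow}A$. *)

theory Defs
  imports Main
begin

definition nest :: "'a set \<Rightarrow> 'a set set \<Rightarrow> bool" where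
  "nest X \<L> \<longleftrightarrow> \<L> \<subseteq> Pow X \<and> (\<forall>A\<in>\<L>. \<forall>B\<in>\<L>. A \<subseteq> B \<or> B \<subseteq> A)"

definition nest_rel :: "'a set set \<Rightarrow> 'a \<Rightarrow> 'a \<Rightarrow> bool" where
  "nest_rel \<L> x y \<longleftrightarrow> (\<exists>L\<in>\<L>. x \<in> L \<and> y \<notin> L)"

definition down :: "'a set \<Rightarrow> 'a set set \<Rightarrow> 'a set \<Rightarrow> 'a set" where
  "down X \<L> A = {x \<in> X. \<exists>y\<in>A. nest_rel \<L> x y}"

definition lower_set :: "'a set \<Rightarrow> 'a set set \<Rightarrow> 'a set \<Rightarrow> bool" where
  "lower_set X \<L> A \<longleftrightarrow> A \<subseteq> X \<and> A = down X \<L> A"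

end

theory Submission
  imports Defs
begin

lemma down_eq_Union_not_supset:
  assumes "\<L> \<subseteq> Pow X"
  shows "down X \<L> M = \<Union>{L \<in> \<L>. \<not> M \<subseteq> L}"
  using assms unfolding down_def nest_rel_def by blast

lemma nest_not_supset_iff_psubset:
  assumes "nest X \<L>" and "M \<in> \<L>" and "L \<in> \<L>"
  shows "\<not> M \<subseteq> L \<longleftrightarrow> L \<subset> M"
  using assms unfolding nest_def by blast

theorem proposition3p11:
  fixes X :: "'a set" and \<L> :: "'a set set" and M :: "'a set"
  assumes "nest X \<L>" and "M \<in> \<L>"
  shows "down X \<L> M = \<Union>{L \<in> \<L>. \<not> M \<subseteq> L}
    \<and> \<Union>{L \<in> \<L>. \<not> M \<subseteq> L} = \<Union>{L \<in> \<L>. L \<subset> M}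
    \<and> (lower_set X \<L> M \<longleftrightarrow> M = \<Union>{L \<in> \<L>. L \<subset> M})"
proof -
  have "\<L> \<subseteq> Pow X"
    using assms(1) unfolding nest_def by blast
  then have M_sub: "M \<subseteq> X" and down: "down X \<L> M = \<Union>{L \<in> \<L>. \<not> M \<subseteq> L}"
    using assms(2) down_eq_Union_not_supset by blast+
  have "{L \<in> \<L>. \<not> M \<subseteq> L} = {L \<in> \<L>. L \<subset> M}"
    using nest_not_supset_iff_psubset[OF assms] by blast
  with down M_sub show ?thesis
    unfolding lower_set_def by auto
qed

end
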